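(* Let $G$ be a finite $p$-group and let $N, C_1, C_2$ be normal subgroups of $G$ with $C_1\subseteq C_2$. Let $P:=\{g\in N : [g,C_2]\subseteq[C_1,N]\}$. Then: (1) $\{g\in N : b_{C_1}(g)\geq b_{C_2}(g)\}\subseteq P$; (2) $P$ is a normal subgroup of $G$; (3) if $P=N$, then $[C_1,N]=[C_2,N]$.
   Context: Commutators are $[x,y]=x^{-1}y^{-1}xy$; for $g\in G$ and a subgroup $H$, $[g,H]=\{[g,h]:h\in H\}$; for subgroups $G_1,G_2$, $[G_1,G_2]$ is the subgroup generated by all $[g_1,g_2]$, $g_i\in G_i$. For a subgroup $K$ of $G$ and $g\in G$, $b_K(g):=\log_p|K:K\cap Z_G(g)|$, where $Z_G(g)$ is the centralizer of $g$ in $G$. *)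

theory Defs
  imports "HOL-Algebra.Algebra"
begin

definition comm :: "('a, 'b) monoid_scheme \<Rightarrow> 'a \<Rightarrow> 'a \<Rightarrow> 'a" where
  "comm G x y = inv\<^bsub>G\<^esub> x \<otimes>\<^bsub>G\<^esub> inv\<^bsub>G\<^esub> y \<otimes>\<^bsub>G\<^esub> x \<otimes>\<^bsub>G\<^esub> y"

definition comm_elt_set :: "('a, 'b) monoid_scheme \<Rightarrow> 'a \<Rightarrow> 'a set \<Rightarrow> 'a set" where
  "comm_elt_set G g H = {comm G g h | h. h \<in> H}"

definition comm_subgroup :: "('a, 'b) monoid_scheme \<Rightarrow> 'a set \<Rightarrow> 'a set \<Rightarrow> 'a set" where
  "comm_subgroup G G1 G2 = generate G {comm G x y | x y. x \<in> G1 \<and> y \<in> G2}"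

definition centralizer_elt :: "('a, 'b) monoid_scheme \<Rightarrow> 'a \<Rightarrow> 'a set" where
  "centralizer_elt G g = {x \<in> carrier G. x \<otimes>\<^bsub>G\<^esub> g = g \<otimes>\<^bsub>G\<^esub> x}"

definition b_index :: "('a, 'b) monoid_scheme \<Rightarrow> nat \<Rightarrow> 'a set \<Rightarrow> 'a \<Rightarrow> real" where
  "b_index G p K g = log (real p) (real (card K) / real (card (K \<inter> centralizer_elt G g)))"

end

theory Submission imports Defs begin

text \<open>
  Since \<open>[g,K]\<close> is a left translate of the \<open>K\<close>-conjugacy class of \<open>g\<close>, the orbit-stabilizer
  theorem gives \<open>b\<^sub>K(g) = log\<^sub>p |[g,K]|\<close>. As \<open>[g,C\<^sub>1] \<subseteq> [g,C\<^sub>2]\<close>, the inequality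
  \<open>b\<^sub>C\<^sub>1(g) \<ge> b\<^sub>C\<^sub>2(g)\<close> forces \<open>[g,C\<^sub>2] = [g,C\<^sub>1] \<subseteq> [C\<^sub>1,N]\<close>. That \<open>P\<close> is a normal subgroup
  follows from the commutator identities \<open>[ab,h] = [a,h]\<^bsup>b\<^esup>[b,h]\<close> and
  \<open>[g\<^bsup>x\<^esup>,h] = [g,h\<^bsup>x\<^sup>-\<^sup>1\<^esup>]\<^bsup>x\<^esup>\<close> together with the normality of \<open>[C\<^sub>1,N]\<close> and \<open>C\<^sub>2\<close>.
  Finally \<open>[C\<^sub>2,N] = [N,C\<^sub>2]\<close> is generated by the sets \<open>[g,C\<^sub>2]\<close>, \<open>g \<in> N\<close>.
\<close>

lemma comm_elt_set_subset_iff: "comm_elt_set G g K \<subseteq> D \<longleftrightarrow> (\<forall>h\<in>K. comm G g h \<in> D)"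
  by (auto simp: comm_elt_set_def)

lemma comm_elt_set_mono: "K \<subseteq> K' \<Longrightarrow> comm_elt_set G g K \<subseteq> comm_elt_set G g K'"
  by (auto simp: comm_elt_set_def)

lemma comm_in_comm_subgroup: "x \<in> A \<Longrightarrow> y \<in> B \<Longrightarrow> comm G x y \<in> comm_subgroup G A B"
  unfolding comm_subgroup_def by (blast intro: generate.incl)

context group begin

lemma inv_mult_cancel_left [simp]: "x \<in> carrier G \<Longrightarrow> y \<in> carrier G \<Longrightarrow> inv x \<otimes> (x \<otimes> y) = y"
  by (simp add: m_assoc [symmetric])

lemma mult_inv_cancel_left [simp]: "x \<in> carrier G \<Longrightarrow> y \<in> carrier G \<Longrightarrow> x \<otimes> (inv x \<otimes> y) = y"
  by (simp add: m_assoc [symmetric])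

lemma comm_closed [simp]: "x \<in> carrier G \<Longrightarrow> y \<in> carrier G \<Longrightarrow> comm G x y \<in> carrier G"
  by (simp add: comm_def)

lemma inv_comm: "x \<in> carrier G \<Longrightarrow> y \<in> carrier G \<Longrightarrow> inv (comm G x y) = comm G y x"
  by (simp add: comm_def inv_mult_group m_assoc)

lemma comm_one_left: "h \<in> carrier G \<Longrightarrow> comm G \<one> h = \<one>"
  by (simp add: comm_def m_assoc)

lemma comm_mult_left: "g \<in> carrier G \<Longrightarrow> g' \<in> carrier G \<Longrightarrow> h \<in> carrier G \<Longrightarrow>
    comm G (g \<otimes> g') h = inv g' \<otimes> comm G g h \<otimes> g' \<otimes> comm G g' h"
  by (simp add: comm_def inv_mult_group m_assoc)

lemma comm_inv_left: "g \<in> carrier G \<Longrightarrow> h \<in> carrier G \<Longrightarrow>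
    comm G (inv g) h = g \<otimes> inv (comm G g h) \<otimes> inv g"
  by (simp add: comm_def inv_mult_group m_assoc)

lemma comm_conj_left: "g \<in> carrier G \<Longrightarrow> x \<in> carrier G \<Longrightarrow> h \<in> carrier G \<Longrightarrow>
    comm G (x \<otimes> g \<otimes> inv x) h = x \<otimes> comm G g (inv x \<otimes> h \<otimes> x) \<otimes> inv x"
  by (simp add: comm_def inv_mult_group m_assoc)

lemma comm_conj: "g \<in> carrier G \<Longrightarrow> x \<in> carrier G \<Longrightarrow> y \<in> carrier G \<Longrightarrow>
    g \<otimes> comm G x y \<otimes> inv g = comm G (g \<otimes> x \<otimes> inv g) (g \<otimes> y \<otimes> inv g)"
  by (simp add: comm_def inv_mult_group m_assoc)

lemma comm_generators_subset:
  "A \<subseteq> carrier G \<Longrightarrow> B \<subseteq> carrier G \<Longrightarrow> {comm G x y | x y. x \<in> A \<and> y \<in> B} \<subseteq> carrier G"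
  by (blast intro: comm_closed)

lemma subgroup_comm_subgroup:
  "A \<subseteq> carrier G \<Longrightarrow> B \<subseteq> carrier G \<Longrightarrow> subgroup (comm_subgroup G A B) G"
  unfolding comm_subgroup_def by (intro generate_is_subgroup comm_generators_subset)

lemma comm_subgroup_mono: "A \<subseteq> A' \<Longrightarrow> B \<subseteq> B' \<Longrightarrow> comm_subgroup G A B \<subseteq> comm_subgroup G A' B'"
  unfolding comm_subgroup_def by (intro mono_generate) blast

lemma comm_subgroup_sym_subset:
  assumes "A \<subseteq> carrier G" "B \<subseteq> carrier G"
  shows "comm_subgroup G B A \<subseteq> comm_subgroup G A B"
  unfolding comm_subgroup_def[of G B A]
proof (rule generate_subgroup_incl)
  show "{comm G y x | y x. y \<in> B \<and> x \<in> A} \<subseteq> comm_subgroup G A B"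
  proof clarify
    fix x y assume "x \<in> A" "y \<in> B"
    then have "inv (comm G x y) \<in> comm_subgroup G A B"
      by (intro subgroup.m_inv_closed[OF subgroup_comm_subgroup[OF assms]] comm_in_comm_subgroup)
    with \<open>x \<in> A\<close> \<open>y \<in> B\<close> assms show "comm G y x \<in> comm_subgroup G A B"
      by (metis inv_comm subsetD)
  qed
qed (rule subgroup_comm_subgroup[OF assms])

lemma comm_subgroup_sym:
  "A \<subseteq> carrier G \<Longrightarrow> B \<subseteq> carrier G \<Longrightarrow> comm_subgroup G A B = comm_subgroup G B A"
  by (intro equalityI comm_subgroup_sym_subset)

lemma comm_elt_set_subset_comm_subgroup:
  assumes "A \<subseteq> carrier G" "B \<subseteq> carrier G" "g \<in> B"
  shows "comm_elt_set G g A \<subseteq> comm_subgroup G A B"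
proof -
  have "comm_elt_set G g A \<subseteq> comm_subgroup G B A"
    using \<open>g \<in> B\<close> by (auto simp: comm_elt_set_subset_iff intro: comm_in_comm_subgroup)
  with assms show ?thesis by (simp add: comm_subgroup_sym)
qed

lemma comm_subgroup_normal:
  assumes "A \<lhd> G" "B \<lhd> G"
  shows "comm_subgroup G A B \<lhd> G"
  unfolding comm_subgroup_def
proof (rule normal_generateI)
  have "A \<subseteq> carrier G" "B \<subseteq> carrier G"
    using assms normal_imp_subgroup subgroup.subset by blast+
  then show "{comm G x y | x y. x \<in> A \<and> y \<in> B} \<subseteq> carrier G"
    by (rule comm_generators_subset)
  fix c g assume "c \<in> {comm G x y | x y. x \<in> A \<and> y \<in> B}" and g: "g \<in> carrier G"
  then obtain x y where "x \<in> A" "y \<in> B" and c: "c = comm G x y" by blast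
  with assms g have "g \<otimes> x \<otimes> inv g \<in> A" "g \<otimes> y \<otimes> inv g \<in> B"
    by (simp_all add: normal.inv_op_closed2)
  moreover have "g \<otimes> c \<otimes> inv g = comm G (g \<otimes> x \<otimes> inv g) (g \<otimes> y \<otimes> inv g)"
    using \<open>x \<in> A\<close> \<open>y \<in> B\<close> \<open>A \<subseteq> carrier G\<close> \<open>B \<subseteq> carrier G\<close> g c
    by (simp add: comm_conj subsetD)
  ultimately show "g \<otimes> c \<otimes> inv g \<in> {comm G x y | x y. x \<in> A \<and> y \<in> B}" by blast
qed

lemma comm_elt_set_subset_normal:
  assumes N: "N \<lhd> G" and C: "C \<lhd> G" and D: "D \<lhd> G"
  shows "{g \<in> N. comm_elt_set G g C \<subseteq> D} \<lhd> G"
proof -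
  let ?P = "{g \<in> N. \<forall>h\<in>C. comm G g h \<in> D}"
  interpret N: subgroup N G using N normal_imp_subgroup by blast
  interpret C: subgroup C G using C normal_imp_subgroup by blast
  interpret D: subgroup D G using D normal_imp_subgroup by blast
  have conj_D: "x \<otimes> d \<otimes> inv x \<in> D" if "x \<in> carrier G" "d \<in> D" for x d
    using D that by (rule normal.inv_op_closed2)
  have "subgroup ?P G"
  proof (rule subgroupI)
    show "?P \<subseteq> carrier G" by auto
    have "\<one> \<in> ?P" by (simp add: comm_one_left)
    then show "?P \<noteq> {}" by blast
  next
    fix a assume "a \<in> ?P"
    then show "inv a \<in> ?P"
      by (auto simp: comm_inv_left conj_D)
  next
    fix a b assume a: "a \<in> ?P" and b: "b \<in> ?P"
    have "comm G (a \<otimes> b) h \<in> D" if "h \<in> C" for h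
    proof -
      have "inv b \<otimes> comm G a h \<otimes> inv (inv b) \<in> D"
        using a b that by (intro conj_D) auto
      then show ?thesis
        using a b that by (auto simp: comm_mult_left)
    qed
    with a b show "a \<otimes> b \<in> ?P" by auto
  qed
  moreover have "x \<otimes> g \<otimes> inv x \<in> ?P" if x: "x \<in> carrier G" and g: "g \<in> ?P" for x g
  proof -
    have "comm G (x \<otimes> g \<otimes> inv x) h \<in> D" if "h \<in> C" for h
    proof -
      have "inv x \<otimes> h \<otimes> inv (inv x) \<in> C"
        using C x that by (intro normal.inv_op_closed2) auto
      with g x have "comm G g (inv x \<otimes> h \<otimes> x) \<in> D" by auto
      with g x that show ?thesis by (auto simp: comm_conj_left conj_D)
    qed
    with g x N show ?thesis by (auto simp: normal.inv_op_closed2)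
  qed
  ultimately have "?P \<lhd> G" by (rule normal_invI)
  then show ?thesis by (simp add: comm_elt_set_subset_iff)
qed

lemma comm_elt_set_eq_translate_conjugates:
  assumes "subgroup K G" "g \<in> carrier G"
  shows "comm_elt_set G g K = (\<lambda>x. inv g \<otimes> x) ` (\<lambda>k. k \<otimes> g \<otimes> inv k) ` K"
proof -
  interpret K: subgroup K G by fact
  have "K = m_inv G ` K"
    by (force intro: image_eqI[of _ "m_inv G", OF inv_inv[symmetric]])
  then have "comm_elt_set G g K = comm G g ` m_inv G ` K"
    by (auto simp: comm_elt_set_def)
  also have "\<dots> = (\<lambda>x. inv g \<otimes> x) ` (\<lambda>k. k \<otimes> g \<otimes> inv k) ` K"
    unfolding image_image using assms(2)
    by (intro image_cong) (auto simp: comm_def m_assoc)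
  finally show ?thesis .
qed

lemma card_comm_elt_set:
  assumes K: "subgroup K G" and g: "g \<in> carrier G"
  shows "card (comm_elt_set G g K) * card (K \<inter> centralizer_elt G g) = card K"
proof -
  interpret K: subgroup K G by fact
  let ?H = "G\<lparr>carrier := K\<rparr>"
  let ?conj = "\<lambda>k. \<lambda>x\<in>carrier G. k \<otimes> x \<otimes> inv k"
  interpret conj: group_action ?H "carrier G" ?conj
    unfolding group_action_def
    using group_hom.induced_group_hom'[OF action_by_conjugation[unfolded group_action_def] K] .
  have "orbit ?H ?conj g = (\<lambda>k. k \<otimes> g \<otimes> inv k) ` K"
    using g by (auto simp: orbit_def)
  then have orbit: "card (comm_elt_set G g K) = card (orbit ?H ?conj g)"
    using g by (simp add: comm_elt_set_eq_translate_conjugates[OF K g] card_image inj_on_def)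
  have "k \<otimes> g \<otimes> inv k = g \<longleftrightarrow> k \<otimes> g = g \<otimes> k" if "k \<in> K" for k
    using that g by (metis K.mem_carrier inv_closed m_closed inv_solve_right)
  then have "stabilizer ?H ?conj g = K \<inter> centralizer_elt G g"
    using g by (auto simp: stabilizer_def centralizer_elt_def)
  with orbit conj.orbit_stabilizer_theorem[OF g] show ?thesis
    by (simp add: order_def)
qed

lemma b_index_eq_log_card:
  assumes "finite (carrier G)" "subgroup K G" "g \<in> carrier G"
  shows "b_index G p K g = log (real p) (real (card (comm_elt_set G g K)))"
proof -
  have "\<one> \<in> K \<inter> centralizer_elt G g"
    using assms by (simp add: subgroup.one_closed centralizer_elt_def)
  moreover have "finite (K \<inter> centralizer_elt G g)"
    using assms(1) by (auto simp: centralizer_elt_def)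
  ultimately have "card (K \<inter> centralizer_elt G g) > 0"
    by (auto simp: card_gt_0_iff)
  then show ?thesis
    unfolding b_index_def card_comm_elt_set[OF assms(2,3), symmetric] by simp
qed

lemma comm_elt_set_eq_if_b_index_le:
  assumes fin: "finite (carrier G)" and p: "1 < p"
    and K: "subgroup K G" "subgroup K' G" "K \<subseteq> K'" and g: "g \<in> carrier G"
    and le: "b_index G p K' g \<le> b_index G p K g"
  shows "comm_elt_set G g K = comm_elt_set G g K'"
proof (rule card_seteq)
  show sub: "comm_elt_set G g K \<subseteq> comm_elt_set G g K'"
    using K(3) by (rule comm_elt_set_mono)
  have "comm_elt_set G g K' \<subseteq> carrier G"
    using K(2) g by (auto simp: comm_elt_set_def subgroup.mem_carrier)
  with fin show fin': "finite (comm_elt_set G g K')"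
    by (rule finite_subset[rotated])
  have "comm G g \<one> \<in> comm_elt_set G g K"
    using K(1) by (auto simp: comm_elt_set_def subgroup.one_closed)
  with sub fin' have "card (comm_elt_set G g K) > 0"
    using card_gt_0_iff finite_subset by blast
  moreover have "card (comm_elt_set G g K) \<le> card (comm_elt_set G g K')"
    using fin' sub by (rule card_mono)
  ultimately show "card (comm_elt_set G g K') \<le> card (comm_elt_set G g K)"
    using le p by (simp add: b_index_eq_log_card[OF fin K(1) g] b_index_eq_log_card[OF fin K(2) g])
qed

lemma comm_subgroup_eqI:
  assumes "C\<^sub>1 \<subseteq> C\<^sub>2" "C\<^sub>2 \<subseteq> carrier G" "N \<subseteq> carrier G"
    and "\<forall>g\<in>N. comm_elt_set G g C\<^sub>2 \<subseteq> comm_subgroup G C\<^sub>1 N"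
  shows "comm_subgroup G C\<^sub>1 N = comm_subgroup G C\<^sub>2 N"
proof
  show "comm_subgroup G C\<^sub>1 N \<subseteq> comm_subgroup G C\<^sub>2 N"
    using assms(1) by (rule comm_subgroup_mono) simp
  have "comm_subgroup G N C\<^sub>2 \<subseteq> comm_subgroup G C\<^sub>1 N"
    unfolding comm_subgroup_def[of G N C\<^sub>2]
    using assms by (intro generate_subgroup_incl subgroup_comm_subgroup)
      (auto simp: comm_elt_set_subset_iff)
  with assms show "comm_subgroup G C\<^sub>2 N \<subseteq> comm_subgroup G C\<^sub>1 N"
    by (simp add: comm_subgroup_sym)
qed

end

theorem lemma1:
  fixes G :: "('a, 'b) monoid_scheme" and p n :: nat and N C1 C2 :: "'a set"
  assumes "group G" and "finite (carrier G)" and "Factorial_Ring.prime p" and "order G = p ^ n"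
    and "N \<lhd> G" and "C1 \<lhd> G" and "C2 \<lhd> G" and "C1 \<subseteq> C2"
  defines "P \<equiv> {g \<in> N. comm_elt_set G g C2 \<subseteq> comm_subgroup G C1 N}"
  shows "{g \<in> N. b_index G p C1 g \<ge> b_index G p C2 g} \<subseteq> P
     \<and> P \<lhd> G
     \<and> (P = N \<longrightarrow> comm_subgroup G C1 N = comm_subgroup G C2 N)"
proof -
  interpret group G by fact
  have subgroups: "subgroup N G" "subgroup C1 G" "subgroup C2 G"
    using assms(5-7) by (simp_all add: normal_imp_subgroup)
  then have carriers: "N \<subseteq> carrier G" "C1 \<subseteq> carrier G" "C2 \<subseteq> carrier G"
    by (simp_all add: subgroup.subset)
  have "g \<in> P" if "g \<in> N" and "b_index G p C2 g \<le> b_index G p C1 g" for g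
  proof -
    have "comm_elt_set G g C1 = comm_elt_set G g C2"
      using that assms(2,8) prime_gt_1_nat[OF assms(3)] subgroups carriers
      by (intro comm_elt_set_eq_if_b_index_le) auto
    with carriers(2,1) \<open>g \<in> N\<close> have "comm_elt_set G g C2 \<subseteq> comm_subgroup G C1 N"
      using comm_elt_set_subset_comm_subgroup by metis
    with \<open>g \<in> N\<close> show ?thesis
      unfolding P_def by blast
  qed
  moreover have "P \<lhd> G"
    unfolding P_def using assms(5-7) by (intro comm_elt_set_subset_normal comm_subgroup_normal)
  moreover have "P = N \<longrightarrow> comm_subgroup G C1 N = comm_subgroup G C2 N"
  proof
    assume "P = N"
    then have "\<forall>g\<in>N. comm_elt_set G g C2 \<subseteq> comm_subgroup G C1 N"
      unfolding P_def by blast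
    with assms(8) carriers(3,1) show "comm_subgroup G C1 N = comm_subgroup G C2 N"
      by (rule comm_subgroup_eqI)
  qed
  ultimately show ?thesis by blast
qed

end
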